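(* In a network satisfying (H1) and (H2), let $Y+S_0\rightleftarrows U_1\to Y+S_1\rightleftarrows\cdots\rightleftarrows U_L\to Y+S_L$ be a connected component with rate constants $a_j,b_j,c_j$ as in the context and $K_j:=b_j+c_j$. Then $a_L,b_L,c_L$ are identifiable from $s_L$ using the derivatives $\dot s_L,\ddot s_L$; and if $L>1$, the quantities $a_j$ and $K_j$, $1\le j\le L-1$, are identifiable from $s_L$ using $\dot s_L,\ddot s_L,s_L^{(3)}$.
   Context: Species are capital letters, concentrations lower-case letters. Mass-action system of a network with reactions $y\to y'$ and rates $k_{yy'}>0$ (vector $\mathbf{k}$): $\dot{\mathbf{x}}=\sum k_{yy'}\mathbf{x}^y(y'-y)$. Total derivative: $\dot\varphi=\sum_i\frac{\partial\varphi}{\partial x_i}\dot x_i$ with $\dot x_i$ replaced by the right-hand side; $\varphi^{(\ell)}$ its $\ell$-th iterate. A map $\psi$ of $\mathbf{k}$ is identifiable from $x$ using orders $1\le\ell\le D$ if, for positive $\mathbf{k}^*,\mathbf{k}^{**}$, equality $x^{(\ell)}(\mathbf{x},\mathbf{k}^* )=x^{(\ell)}(\mathbf{x},\mathbf{k}^{**})$ as polynomials in $\mathbf{x}$ for all $1\le\ell\le D$ implies $\psi(\mathbf{k}^* )=\psi(\mathbf{k}^{**})$. (H1) Every connected component has the form $Y+S_0\rightleftarrows U_1\to\cdots\rightleftarrows U_L\to Y+S_L$, i.e. reactions $Y+S_{j-1}\to U_j$ (rate $a_j$), $U_j\to Y+S_{j-1}$ (rate $b_j$), $U_j\to Y+S_j$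 (rate $c_j$); unique enzyme $Y$; intermediates distinct throughout the network; non-intermediates of a component pairwise distinct but may appear in other components; each complex in a unique component. $\mathscr{S}_U$ = substrates/products of the component of intermediate $U$. (H2) A partition $\mathscr{S}^{(0)}\sqcup\cdots\sqcup\mathscr{S}^{(M)}$ ($M\ge2$, nonempty, $\mathscr{S}^{(0)}$ the intermediates) with: for each intermediate $U$ with enzyme $Y$, some $\alpha\ge1$ has $\mathscr{S}_U\subseteq\mathscr{S}^{(\alpha)}$, $Y\notin\mathscr{S}^{(\alpha)}$. *)

theory Defs
  imports "HOL-Analysis.Analysis"
begin

text \<open>Species form a finite type 's; a complex is a vector of stoichiometric
coefficients 's => nat; a reaction is a pair (reactant complex, product complex);
concentrations are vectors x :: 's => real.\<close>

type_synonym 's cplx = "'s \<Rightarrow> nat"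
type_synonym 's reaction = "'s cplx \<times> 's cplx"

definition cpx1 :: "'s \<Rightarrow> 's cplx" where
  "cpx1 A = (\<lambda>s. if s = A then 1 else 0)"

definition cpx2 :: "'s \<Rightarrow> 's \<Rightarrow> 's cplx" where
  "cpx2 A B = (\<lambda>s. (if s = A then 1 else 0) + (if s = B then 1 else 0))"

definition monom :: "('s::finite \<Rightarrow> real) \<Rightarrow> 's cplx \<Rightarrow> real" where
  "monom x y = (\<Prod>s\<in>UNIV. x s ^ y s)"

definition massaction ::
  "('s::finite) reaction set \<Rightarrow> ('s reaction \<Rightarrow> real) \<Rightarrow> ('s \<Rightarrow> real) \<Rightarrow> 's \<Rightarrow> real" where
  "massaction R k x i =
     (\<Sum>r\<in>R. k r * monom x (fst r) * (real (snd r i) - real (fst r i)))"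

definition pdiff :: "(('s \<Rightarrow> real) \<Rightarrow> real) \<Rightarrow> 's \<Rightarrow> ('s \<Rightarrow> real) \<Rightarrow> real" where
  "pdiff \<phi> i x = deriv (\<lambda>t. \<phi> (x(i := t))) (x i)"

definition totder ::
  "('s::finite) reaction set \<Rightarrow> ('s reaction \<Rightarrow> real) \<Rightarrow> (('s \<Rightarrow> real) \<Rightarrow> real) \<Rightarrow> ('s \<Rightarrow> real) \<Rightarrow> real" where
  "totder R k \<phi> x = (\<Sum>i\<in>UNIV. pdiff \<phi> i x * massaction R k x i)"

definition iterder ::
  "('s::finite) reaction set \<Rightarrow> ('s reaction \<Rightarrow> real) \<Rightarrow> nat \<Rightarrow> (('s \<Rightarrow> real) \<Rightarrow> real) \<Rightarrow> ('s \<Rightarrow> real) \<Rightarrow> real" where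
  "iterder R k l \<phi> = (totder R k ^^ l) \<phi>"

text \<open>Network given by its components, indexed by a finite type 'c:
component c is  Y c + S c 0 <-> U c 1 -> Y c + S c 1 <-> ... <-> U c (L c) -> Y c + S c (L c).\<close>
definition reactions ::
  "('c::finite \<Rightarrow> 's) \<Rightarrow> ('c \<Rightarrow> nat \<Rightarrow> 's) \<Rightarrow> ('c \<Rightarrow> nat \<Rightarrow> 's) \<Rightarrow> ('c \<Rightarrow> nat) \<Rightarrow> 's reaction set" where
  "reactions Y S U L = (\<Union>c. \<Union>j\<in>{1..L c}.
      {(cpx2 (Y c) (S c (j - 1)), cpx1 (U c j)),
       (cpx1 (U c j), cpx2 (Y c) (S c (j - 1))),
       (cpx1 (U c j), cpx2 (Y c) (S c j))})"

definition rate_a where "rate_a Y S U k c j = k (cpx2 (Y c) (S c (j - 1)), cpx1 (U c j))"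
definition rate_b where "rate_b Y S U k c j = k (cpx1 (U c j), cpx2 (Y c) (S c (j - 1)))"
definition rate_c where "rate_c Y S U k c j = k (cpx1 (U c j), cpx2 (Y c) (S c j))"
definition rate_K where "rate_K Y S U k c j = rate_b Y S U k c j + rate_c Y S U k c j"

definition intermediates where
  "intermediates U L = {U c j | c j. 1 \<le> j \<and> j \<le> L c}"

definition H1 ::
  "('c::finite \<Rightarrow> 's::finite) \<Rightarrow> ('c \<Rightarrow> nat \<Rightarrow> 's) \<Rightarrow> ('c \<Rightarrow> nat \<Rightarrow> 's) \<Rightarrow> ('c \<Rightarrow> nat) \<Rightarrow> bool" where
  "H1 Y S U L \<longleftrightarrow>
     (\<forall>c. 1 \<le> L c) \<and>
     \<comment> \<open>non-intermediates of a component pairwise distinct\<close>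
     (\<forall>c. inj_on (S c) {0..L c} \<and> Y c \<notin> S c ` {0..L c}) \<and>
     \<comment> \<open>intermediates distinct throughout the network\<close>
     inj_on (\<lambda>(c, j). U c j) {(c, j). 1 \<le> j \<and> j \<le> L c} \<and>
     \<comment> \<open>intermediates are not non-intermediates of any component\<close>
     (\<forall>c c' j i. 1 \<le> j \<longrightarrow> j \<le> L c \<longrightarrow> i \<le> L c' \<longrightarrow>
        U c j \<noteq> S c' i \<and> U c j \<noteq> Y c') \<and>
     \<comment> \<open>each complex lies in a unique component\<close>
     (\<forall>c c' i i'. c \<noteq> c' \<longrightarrow> i \<le> L c \<longrightarrow> i' \<le> L c' \<longrightarrow>
        cpx2 (Y c) (S c i) \<noteq> cpx2 (Y c') (S c' i')) \<and>
     \<comment> \<open>the species set of the network is exactly the species type\<close>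
     (\<forall>s. \<exists>c. s = Y c \<or> (\<exists>i\<le>L c. s = S c i) \<or> (\<exists>j. 1 \<le> j \<and> j \<le> L c \<and> s = U c j))"

text \<open>Hypothesis (H2): partition given by a class map cls onto {0..M}, class 0 = intermediates.\<close>
definition H2 ::
  "('c::finite \<Rightarrow> 's::finite) \<Rightarrow> ('c \<Rightarrow> nat \<Rightarrow> 's) \<Rightarrow> ('c \<Rightarrow> nat \<Rightarrow> 's) \<Rightarrow> ('c \<Rightarrow> nat)
     \<Rightarrow> ('s \<Rightarrow> nat) \<Rightarrow> nat \<Rightarrow> bool" where
  "H2 Y S U L cls M \<longleftrightarrow>
     2 \<le> M \<and> range cls = {0..M} \<and>
     (\<forall>s. cls s = 0 \<longleftrightarrow> s \<in> intermediates U L) \<and>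
     (\<forall>c j. 1 \<le> j \<and> j \<le> L c \<longrightarrow>
        (\<exists>\<alpha>\<ge>1. (\<forall>i\<le>L c. cls (S c i) = \<alpha>) \<and> cls (Y c) \<noteq> \<alpha>))"

definition identifiable ::
  "('s::finite) reaction set \<Rightarrow> (('s reaction \<Rightarrow> real) \<Rightarrow> 'b) \<Rightarrow> 's \<Rightarrow> nat \<Rightarrow> bool" where
  "identifiable R \<psi> X D \<longleftrightarrow>
     (\<forall>k1 k2. (\<forall>r\<in>R. 0 < k1 r) \<longrightarrow> (\<forall>r\<in>R. 0 < k2 r) \<longrightarrow>
        (\<forall>l\<in>{1..D}. iterder R k1 l (\<lambda>x. x X) = iterder R k2 l (\<lambda>x. x X)) \<longrightarrow>
        \<psi> k1 = \<psi> k2)"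

end

theory Submission
  imports Defs
begin

text \<open>The Lie derivatives of the observed coordinate s_L are polynomials in the
  concentrations, so rate vectors with equal derivatives give equal values at every point. We
  evaluate at indicator vectors of sets of species of the observed component not containing
  S_L. By (H1) and (H2), two species of one component form a reactant complex only inside that
  component, so only the observed chain fires there and the derivatives collapse: at {U_L} one
  gets c_L and -(b_L + c_L) c_L, at {Y, S_(L-1)} the second derivative is a_L c_L, and the third
  derivatives at {U_j, S_(L-1)} and {Y, S_(L-1), S_(j-1)} are K_j a_L c_L and
  -a_L c_L (K_L + 2 a_L + a_j). As a_L, c_L > 0, these determine c_L, b_L, a_L, K_j and a_j in
  turn.\<close>

section \<open>Lie derivatives of mass-action systems\<close>

text \<open>The truncated subtraction \<open>y a - 1\<close> is harmless: the factor \<open>real (y a)\<close> vanishes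
  when \<open>y a = 0\<close>.\<close>

definition dmonom :: "'s cplx \<Rightarrow> 's \<Rightarrow> ('s::finite \<Rightarrow> real) \<Rightarrow> real" where
  "dmonom y a x = real (y a) * monom x (y(a := y a - 1))"

definition ddmonom :: "'s cplx \<Rightarrow> 's \<Rightarrow> 's \<Rightarrow> ('s::finite \<Rightarrow> real) \<Rightarrow> real" where
  "ddmonom y i a x = real (y i) * dmonom (y(i := y i - 1)) a x"

definition rvec :: "'s reaction \<Rightarrow> 's \<Rightarrow> real" where
  "rvec r i = real (snd r i) - real (fst r i)"

definition rvec_dot :: "('s::finite \<Rightarrow> real) \<Rightarrow> 's reaction \<Rightarrow> real" where
  "rvec_dot h r = (\<Sum>i\<in>UNIV. h i * rvec r i)"

definition ma_jacobian ::
  "('s::finite) reaction set \<Rightarrow> ('s reaction \<Rightarrow> real) \<Rightarrow> ('s \<Rightarrow> real) \<Rightarrow> 's \<Rightarrow> 's \<Rightarrow> real" where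
  "ma_jacobian R k x i a = (\<Sum>r\<in>R. k r * dmonom (fst r) a x * rvec r i)"

definition ma_hessian ::
  "('s::finite) reaction set \<Rightarrow> ('s reaction \<Rightarrow> real) \<Rightarrow> ('s \<Rightarrow> real) \<Rightarrow> 's \<Rightarrow> 's \<Rightarrow> 's \<Rightarrow> real" where
  "ma_hessian R k x s i a = (\<Sum>r\<in>R. k r * ddmonom (fst r) i a x * rvec r s)"

lemma monom_fun_upd:
  fixes x :: "'s::finite \<Rightarrow> real"
  shows "monom (x(a := t)) y = t ^ y a * (\<Prod>s\<in>UNIV - {a}. x s ^ y s)"
proof -
  have "monom (x(a := t)) y = (x(a := t)) a ^ y a * (\<Prod>s\<in>UNIV - {a}. (x(a := t)) s ^ y s)"
    unfolding monom_def by (rule prod.remove) auto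
  also have "(\<Prod>s\<in>UNIV - {a}. (x(a := t)) s ^ y s) = (\<Prod>s\<in>UNIV - {a}. x s ^ y s)"
    by (rule prod.cong) auto
  finally show ?thesis by (metis fun_upd_same)
qed

lemma monom_has_real_derivative:
  fixes x :: "'s::finite \<Rightarrow> real"
  shows "((\<lambda>t. monom (x(a := t)) y) has_real_derivative dmonom y a x) (at (x a))"
proof -
  define C where "C = (\<Prod>s\<in>UNIV - {a}. x s ^ y s)"
  have "(\<lambda>t. monom (x(a := t)) y) = (\<lambda>t. t ^ y a * C)"
    unfolding C_def by (rule ext, rule monom_fun_upd)
  moreover have "dmonom y a x = real (y a) * x a ^ (y a - 1) * C"
    using monom_fun_upd[of x a "x a" "y(a := y a - 1)"]
    by (simp add: dmonom_def C_def
        prod.cong[of "UNIV - {a}" _ "\<lambda>s. x s ^ (y(a := y a - 1)) s" "\<lambda>s. x s ^ y s"])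
  ultimately show ?thesis
    by (auto intro!: derivative_eq_intros)
qed

lemma dmonom_has_real_derivative:
  fixes x :: "'s::finite \<Rightarrow> real"
  shows "((\<lambda>t. dmonom y i (x(a := t))) has_real_derivative ddmonom y i a x) (at (x a))"
proof -
  have "(\<lambda>t. dmonom y i (x(a := t))) = (\<lambda>t. real (y i) * monom (x(a := t)) (y(i := y i - 1)))"
    by (simp add: dmonom_def)
  then show ?thesis
    unfolding ddmonom_def by (simp only: DERIV_cmult[OF monom_has_real_derivative])
qed

lemma pdiff_eqI:
  "((\<lambda>t. \<phi> (x(i := t))) has_real_derivative D) (at (x i)) \<Longrightarrow> pdiff \<phi> i x = D"
  unfolding pdiff_def by (rule DERIV_imp_deriv)

lemma massaction_eq_rvec: "massaction R k x i = (\<Sum>r\<in>R. k r * monom x (fst r) * rvec r i)"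
  by (simp add: massaction_def rvec_def)

lemma massaction_has_real_derivative:
  fixes x :: "'s::finite \<Rightarrow> real"
  shows "((\<lambda>t. massaction R k (x(a := t)) i) has_real_derivative ma_jacobian R k x i a) (at (x a))"
  unfolding massaction_eq_rvec ma_jacobian_def
  by (intro DERIV_sum DERIV_cmult_right DERIV_cmult monom_has_real_derivative)

lemma ma_jacobian_has_real_derivative:
  fixes x :: "'s::finite \<Rightarrow> real"
  shows "((\<lambda>t. ma_jacobian R k (x(a := t)) s i) has_real_derivative ma_hessian R k x s i a)
           (at (x a))"
  unfolding ma_jacobian_def ma_hessian_def
  by (intro DERIV_sum DERIV_cmult_right DERIV_cmult dmonom_has_real_derivative)

lemma sum_mult_massaction:
  "(\<Sum>i\<in>UNIV. g i * massaction R k x i) = (\<Sum>r\<in>R. k r * monom x (fst r) * rvec_dot g r)"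
  unfolding massaction_eq_rvec rvec_dot_def sum_distrib_left
  by (subst sum.swap) (simp add: sum_distrib_left mult_ac)

lemma sum_mult_ma_jacobian:
  "(\<Sum>i\<in>UNIV. g i * ma_jacobian R k x i a) = (\<Sum>r\<in>R. k r * dmonom (fst r) a x * rvec_dot g r)"
  unfolding ma_jacobian_def rvec_dot_def sum_distrib_left
  by (subst sum.swap) (simp add: sum_distrib_left mult_ac)

lemma iterder_Suc:
  "iterder R k (Suc l) \<phi> x =
     (\<Sum>r\<in>R. k r * monom x (fst r) * rvec_dot (\<lambda>i. pdiff (iterder R k l \<phi>) i x) r)"
  by (simp add: iterder_def totder_def sum_mult_massaction)

lemma pdiff_coordinate: "pdiff (\<lambda>x. x s) i x = (if i = s then 1 else 0)"
  by (rule pdiff_eqI) (auto intro!: derivative_eq_intros)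

lemma rvec_eq_rvec_dot: "rvec r s = rvec_dot (\<lambda>i. if i = s then 1 else 0) r"
  by (simp add: rvec_dot_def if_distrib[of "\<lambda>z. z * _"] cong: if_cong)

lemma iterder_1: "iterder R k 1 (\<lambda>x. x s) = (\<lambda>x. massaction R k x s)"
proof -
  have "iterder R k (Suc 0) (\<lambda>x. x s) x = massaction R k x s" for x
    unfolding iterder_Suc
    by (simp add: iterder_def pdiff_coordinate massaction_eq_rvec rvec_eq_rvec_dot)
  then show ?thesis by auto
qed

lemma pdiff_iterder_1: "pdiff (iterder R k 1 (\<lambda>x. x s)) a x = ma_jacobian R k x s a"
  unfolding iterder_1 by (rule pdiff_eqI, rule massaction_has_real_derivative)

lemma pdiff_iterder_2:
  "pdiff (iterder R k 2 (\<lambda>x. x s)) a x =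
     (\<Sum>r\<in>R. k r * monom x (fst r) * rvec_dot (\<lambda>i. ma_hessian R k x s i a) r) +
     (\<Sum>r\<in>R. k r * dmonom (fst r) a x * rvec_dot (ma_jacobian R k x s) r)"
proof -
  have "iterder R k 2 (\<lambda>x. x s) = (\<lambda>x. \<Sum>i\<in>UNIV. ma_jacobian R k x s i * massaction R k x i)"
  proof -
    have "iterder R k 2 (\<lambda>x. x s) = totder R k (iterder R k 1 (\<lambda>x. x s))"
      by (simp add: iterder_def numeral_2_eq_2)
    then show ?thesis unfolding totder_def pdiff_iterder_1 .
  qed
  then have "pdiff (iterder R k 2 (\<lambda>x. x s)) a x =
      (\<Sum>i\<in>UNIV. ma_hessian R k x s i a * massaction R k x i +
                   ma_jacobian R k x s i * ma_jacobian R k x i a)"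
    by (auto intro!: pdiff_eqI DERIV_sum derivative_eq_intros
          ma_jacobian_has_real_derivative massaction_has_real_derivative)
  then show ?thesis
    by (simp only: sum.distrib sum_mult_massaction sum_mult_ma_jacobian)
qed

lemma iterder_2:
  "iterder R k 2 (\<lambda>x. x s) x = (\<Sum>r\<in>R. k r * monom x (fst r) * rvec_dot (ma_jacobian R k x s) r)"
proof -
  have "iterder R k 2 (\<lambda>x. x s) x = iterder R k (Suc 1) (\<lambda>x. x s) x"
    by (simp add: numeral_2_eq_2)
  then show ?thesis unfolding iterder_Suc pdiff_iterder_1 .
qed

lemma iterder_3:
  "iterder R k 3 \<phi> x =
     (\<Sum>r\<in>R. k r * monom x (fst r) * rvec_dot (\<lambda>a. pdiff (iterder R k 2 \<phi>) a x) r)"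
proof -
  have "iterder R k 3 \<phi> x = iterder R k (Suc 2) \<phi> x"
    by (simp add: numeral_3_eq_3 numeral_2_eq_2)
  then show ?thesis unfolding iterder_Suc .
qed

section \<open>Complexes with at most two species\<close>

lemma cpx1_apply: "cpx1 A z = (if z = A then 1 else 0)"
  by (simp add: cpx1_def)

lemma cpx2_apply: "cpx2 A B z = (if z = A then 1 else 0) + (if z = B then 1 else 0)"
  by (simp add: cpx2_def)

lemma cpx1_inject [simp]: "cpx1 A = cpx1 B \<longleftrightarrow> A = B"
proof
  assume "cpx1 A = cpx1 B"
  then have "cpx1 A A = cpx1 B A" by simp
  then show "A = B" by (simp add: cpx1_def split: if_splits)
qed simp

lemma cpx2_commute: "cpx2 A B = cpx2 B A"
  by (auto simp: cpx2_def)

lemma cpx2_neq_cpx1: "C \<noteq> A \<Longrightarrow> C \<noteq> B \<Longrightarrow> cpx2 A B \<noteq> cpx1 C"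
proof
  assume "C \<noteq> A" "C \<noteq> B" "cpx2 A B = cpx1 C"
  then have "cpx2 A B C = cpx1 C C" by simp
  with \<open>C \<noteq> A\<close> \<open>C \<noteq> B\<close> show False by (simp add: cpx1_def cpx2_def)
qed

lemma monom_cpx1 [simp]: "monom x (cpx1 A) = x A"
proof -
  have "monom x (cpx1 A) = (\<Prod>s\<in>UNIV. if s = A then x s else 1)"
    unfolding monom_def cpx1_def by (rule prod.cong) auto
  then show ?thesis by simp
qed

lemma monom_cpx2: "A \<noteq> B \<Longrightarrow> monom x (cpx2 A B) = x A * x B"
proof -
  have "monom x (cpx2 A B) = (\<Prod>s\<in>UNIV. (if s = A then x s else 1) * (if s = B then x s else 1))"
    unfolding monom_def cpx2_def by (rule prod.cong) (auto simp: power_add)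
  then show "A \<noteq> B \<Longrightarrow> ?thesis" by (simp add: prod.distrib)
qed

lemma dmonom_cpx1 [simp]: "dmonom (cpx1 A) a x = (if a = A then 1 else 0)"
proof -
  have "(cpx1 A)(A := 0) = (\<lambda>_. 0)" by (auto simp: cpx1_def)
  moreover have "monom x (\<lambda>_. 0) = 1" by (simp add: monom_def)
  ultimately show ?thesis by (auto simp: dmonom_def cpx1_apply)
qed

lemma dmonom_cpx2:
  assumes "A \<noteq> B"
  shows "dmonom (cpx2 A B) a x = (if a = A then x B else if a = B then x A else 0)"
proof -
  have "(cpx2 A B)(A := 0) = cpx1 B" "(cpx2 A B)(B := 0) = cpx1 A"
    using assms by (auto simp: cpx2_def cpx1_def)
  with assms show ?thesis by (auto simp: dmonom_def cpx2_def)
qed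

lemma ddmonom_cpx1 [simp]: "ddmonom (cpx1 A) i a x = 0"
proof -
  have "(cpx1 A)(A := 0) = (\<lambda>_. 0)" by (auto simp: cpx1_def)
  then show ?thesis by (auto simp: ddmonom_def dmonom_def cpx1_def)
qed

lemma ddmonom_cpx2:
  assumes "A \<noteq> B"
  shows "ddmonom (cpx2 A B) i a x = (if (i = A \<and> a = B) \<or> (i = B \<and> a = A) then 1 else 0)"
proof -
  have "(cpx2 A B)(A := 0) = cpx1 B" "(cpx2 A B)(B := 0) = cpx1 A"
    using assms by (auto simp: cpx2_def cpx1_def)
  with assms show ?thesis by (auto simp: ddmonom_def cpx2_def)
qed

lemma rvec_dot_eq:
  "rvec_dot h r = (\<Sum>i\<in>UNIV. h i * real (snd r i)) - (\<Sum>i\<in>UNIV. h i * real (fst r i))"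
  by (simp add: rvec_dot_def rvec_def right_diff_distrib sum_subtractf)

lemma sum_mult_cpx1 [simp]:
  fixes h :: "'s::finite \<Rightarrow> real"
  shows "(\<Sum>i\<in>UNIV. h i * real (cpx1 A i)) = h A"
proof -
  have "h i * real (cpx1 A i) = (if i = A then h A else 0)" for i by (simp add: cpx1_apply)
  then show ?thesis by simp
qed

lemma sum_mult_cpx2 [simp]:
  fixes h :: "'s::finite \<Rightarrow> real"
  shows "(\<Sum>i\<in>UNIV. h i * real (cpx2 A B i)) = h A + h B"
proof -
  have "h i * real (cpx2 A B i) = (if i = A then h A else 0) + (if i = B then h B else 0)" for i
    by (simp add: cpx2_apply distrib_left)
  then show ?thesis by (simp add: sum.distrib)
qed

section \<open>Enzymatic chain networks\<close>

lemma sum_eq_single: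
  assumes "finite A" "a \<in> A" "\<And>b. b \<in> A \<Longrightarrow> b \<noteq> a \<Longrightarrow> f b = 0"
  shows "sum f A = f a"
  using assms by (simp add: sum.remove sum.neutral)

lemma sum_eq_pair:
  assumes "finite A" "a \<in> A" "b \<in> A" "a \<noteq> b" "\<And>d. d \<in> A \<Longrightarrow> d \<noteq> a \<Longrightarrow> d \<noteq> b \<Longrightarrow> f d = 0"
  shows "sum f A = f a + f b"
proof -
  have "sum f A = sum f {a, b}" using assms by (intro sum.mono_neutral_right) auto
  then show ?thesis using assms(4) by simp
qed

locale enzyme_network =
  fixes Y :: "'c::finite \<Rightarrow> 's::finite" and S U :: "'c \<Rightarrow> nat \<Rightarrow> 's"
    and L :: "'c \<Rightarrow> nat" and cls :: "'s \<Rightarrow> nat" and M :: nat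
  assumes H1: "H1 Y S U L" and H2: "H2 Y S U L cls M"
begin

abbreviation "R \<equiv> reactions Y S U L"

definition "steps = {(c, j). 1 \<le> j \<and> j \<le> L c}"

definition "rxn_a c j = (cpx2 (Y c) (S c (j - 1)), cpx1 (U c j))"
definition "rxn_b c j = (cpx1 (U c j), cpx2 (Y c) (S c (j - 1)))"
definition "rxn_c c j = (cpx1 (U c j), cpx2 (Y c) (S c j))"

lemma mem_steps [simp]: "(c, j) \<in> steps \<longleftrightarrow> 1 \<le> j \<and> j \<le> L c"
  by (simp add: steps_def)

lemma mem_intermediates: "z \<in> intermediates U L \<longleftrightarrow> (\<exists>(c, j)\<in>steps. z = U c j)"
  unfolding intermediates_def by (auto; blast)

lemma L_pos: "1 \<le> L c"
  using H1 by (simp add: H1_def)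

lemma S_eq_iff: "i \<le> L c \<Longrightarrow> i' \<le> L c \<Longrightarrow> S c i = S c i' \<longleftrightarrow> i = i'"
  using H1 unfolding H1_def inj_on_def by auto

lemma Y_neq_S: "i \<le> L c \<Longrightarrow> Y c \<noteq> S c i"
proof -
  have "Y c \<notin> S c ` {0..L c}" using H1 unfolding H1_def by auto
  then show "i \<le> L c \<Longrightarrow> ?thesis" by force
qed

lemma U_eq_iff:
  "1 \<le> j \<Longrightarrow> j \<le> L c \<Longrightarrow> 1 \<le> j' \<Longrightarrow> j' \<le> L c' \<Longrightarrow> U c j = U c' j' \<longleftrightarrow> c = c' \<and> j = j'"
  using H1 unfolding H1_def inj_on_def by auto

lemma intermediate_not_substrate:
  "1 \<le> j \<Longrightarrow> j \<le> L c \<Longrightarrow> i \<le> L c' \<Longrightarrow> U c j \<noteq> S c' i \<and> U c j \<noteq> Y c'"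
  using H1 unfolding H1_def by (elim conjE) blast

lemma U_neq_S: "1 \<le> j \<Longrightarrow> j \<le> L c \<Longrightarrow> i \<le> L c' \<Longrightarrow> U c j \<noteq> S c' i"
  using intermediate_not_substrate by blast

lemma U_neq_Y: "1 \<le> j \<Longrightarrow> j \<le> L c \<Longrightarrow> U c j \<noteq> Y c'"
  using intermediate_not_substrate[of j c 0 c'] by blast

lemma complex_determines_component:
  "i \<le> L c \<Longrightarrow> i' \<le> L c' \<Longrightarrow> cpx2 (Y c) (S c i) = cpx2 (Y c') (S c' i') \<Longrightarrow> c = c'"
  using H1 unfolding H1_def by (elim conjE) blast

lemma component_class:
  obtains \<alpha> where "\<And>i. i \<le> L c \<Longrightarrow> cls (S c i) = \<alpha>" "cls (Y c) \<noteq> \<alpha>"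
  using H2 L_pos[of c] unfolding H2_def by blast

lemma cls_S_eq: "i \<le> L c \<Longrightarrow> i' \<le> L c \<Longrightarrow> cls (S c i) = cls (S c i')"
  by (metis component_class)

lemma cls_Y_neq_S: "i \<le> L c \<Longrightarrow> cls (Y c) \<noteq> cls (S c i)"
  by (metis component_class)

lemma finite_steps: "finite steps"
proof (rule finite_subset)
  have "L c \<le> Max (range L)" for c by (rule Max_ge) auto
  then show "steps \<subseteq> UNIV \<times> {..Max (range L)}"
    unfolding steps_def using le_trans by blast
qed simp

lemma reactions_eq: "R = (\<Union>(c, j)\<in>steps. {rxn_a c j, rxn_b c j, rxn_c c j})"
  unfolding reactions_def rxn_a_def rxn_b_def rxn_c_def steps_def
  by (rule set_eqI)
    (simp only: UN_iff Bex_def mem_Collect_eq atLeastAtMost_iff split_paired_Ex prod.case, blast)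

lemma assoc_reactant_neq_intermediate:
  assumes "(c, j) \<in> steps" "(c', j') \<in> steps"
  shows "cpx2 (Y c) (S c (j - 1)) \<noteq> cpx1 (U c' j')"
  using assms by (intro cpx2_neq_cpx1 U_neq_Y U_neq_S) auto

lemma distinct_step_reactions:
  assumes "(c, j) \<in> steps"
  shows "rxn_a c j \<noteq> rxn_b c j" "rxn_a c j \<noteq> rxn_c c j" "rxn_b c j \<noteq> rxn_c c j"
proof -
  show "rxn_a c j \<noteq> rxn_b c j" "rxn_a c j \<noteq> rxn_c c j"
    using assoc_reactant_neq_intermediate[OF assms assms]
    by (auto simp: rxn_a_def rxn_b_def rxn_c_def)
  have "j - 1 \<le> L c" "j - 1 \<noteq> j" "j \<le> L c" using assms by auto
  then have "S c j \<noteq> Y c" "S c j \<noteq> S c (j - 1)"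
    using Y_neq_S S_eq_iff by metis+
  then have "cpx2 (Y c) (S c (j - 1)) (S c j) \<noteq> cpx2 (Y c) (S c j) (S c j)"
    by (simp add: cpx2_apply)
  then show "rxn_b c j \<noteq> rxn_c c j"
    by (auto simp: rxn_b_def rxn_c_def)
qed

lemma step_reactions_disjoint:
  assumes "(c, j) \<in> steps" "(c', j') \<in> steps" "(c, j) \<noteq> (c', j')"
  shows "{rxn_a c j, rxn_b c j, rxn_c c j} \<inter> {rxn_a c' j', rxn_b c' j', rxn_c c' j'} = {}"
proof -
  have "U c j \<noteq> U c' j'" using assms by (auto simp: U_eq_iff)
  then show ?thesis
    using assoc_reactant_neq_intermediate[OF assms(1,2)]
      assoc_reactant_neq_intermediate[OF assms(2,1)]
    by (auto simp: rxn_a_def rxn_b_def rxn_c_def)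
qed

lemma sum_reactions:
  "(\<Sum>r\<in>R. g r) = (\<Sum>(c, j)\<in>steps. g (rxn_a c j) + g (rxn_b c j) + g (rxn_c c j))"
proof -
  have "(\<Sum>r\<in>R. g r) = (\<Sum>(c, j)\<in>steps. sum g {rxn_a c j, rxn_b c j, rxn_c c j})"
  proof -
    let ?A = "\<lambda>(c, j). {rxn_a c j, rxn_b c j, rxn_c c j}"
    have "\<forall>p\<in>steps. \<forall>q\<in>steps. p \<noteq> q \<longrightarrow> ?A p \<inter> ?A q = {}"
      using step_reactions_disjoint by fast
    then show ?thesis
      unfolding reactions_eq using finite_steps
      by (subst sum.UNION_disjoint) (auto simp: case_prod_beta)
  qed
  also have "\<dots> = (\<Sum>(c, j)\<in>steps. g (rxn_a c j) + g (rxn_b c j) + g (rxn_c c j))"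
    using distinct_step_reactions by (intro sum.cong) (auto simp: add.assoc)
  finally show ?thesis .
qed


lemma Y_neq_S_pred: "(c, j) \<in> steps \<Longrightarrow> Y c \<noteq> S c (j - 1)"
  by (rule Y_neq_S) auto

lemma monom_rxn_a: "(c, j) \<in> steps \<Longrightarrow> monom x (fst (rxn_a c j)) = x (Y c) * x (S c (j - 1))"
  using Y_neq_S_pred by (simp add: rxn_a_def monom_cpx2)

lemma monom_rxn_bc [simp]:
  "monom x (fst (rxn_b c j)) = x (U c j)" "monom x (fst (rxn_c c j)) = x (U c j)"
  by (simp_all add: rxn_b_def rxn_c_def)

lemma dmonom_rxn_a: "(c, j) \<in> steps \<Longrightarrow> dmonom (fst (rxn_a c j)) a x =
    (if a = Y c then x (S c (j - 1)) else if a = S c (j - 1) then x (Y c) else 0)"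
  using Y_neq_S_pred by (simp add: rxn_a_def dmonom_cpx2)

lemma dmonom_rxn_bc [simp]:
  "dmonom (fst (rxn_b c j)) a x = (if a = U c j then 1 else 0)"
  "dmonom (fst (rxn_c c j)) a x = (if a = U c j then 1 else 0)"
  by (simp_all add: rxn_b_def rxn_c_def)

lemma ddmonom_rxn_a: "(c, j) \<in> steps \<Longrightarrow> ddmonom (fst (rxn_a c j)) i a x =
    (if (i = Y c \<and> a = S c (j - 1)) \<or> (i = S c (j - 1) \<and> a = Y c) then 1 else 0)"
  using Y_neq_S_pred by (simp add: rxn_a_def ddmonom_cpx2)

lemma ddmonom_rxn_bc [simp]:
  "ddmonom (fst (rxn_b c j)) i a x = 0" "ddmonom (fst (rxn_c c j)) i a x = 0"
  by (simp_all add: rxn_b_def rxn_c_def)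

lemma rvec_dot_rxn [simp]:
  "rvec_dot h (rxn_a c j) = h (U c j) - h (Y c) - h (S c (j - 1))"
  "rvec_dot h (rxn_b c j) = h (Y c) + h (S c (j - 1)) - h (U c j)"
  "rvec_dot h (rxn_c c j) = h (Y c) + h (S c j) - h (U c j)"
  by (simp_all add: rxn_a_def rxn_b_def rxn_c_def rvec_dot_eq)

lemma rvec_rxn_nonintermediate:
  assumes "(c, j) \<in> steps" "z \<notin> intermediates U L"
  shows "rvec (rxn_a c j) z = - ((if z = Y c then 1 else 0) + (if z = S c (j - 1) then 1 else 0))"
      (is ?a)
    and "rvec (rxn_b c j) z = (if z = Y c then 1 else 0) + (if z = S c (j - 1) then 1 else 0)"
      (is ?b)
    and "rvec (rxn_c c j) z = (if z = Y c then 1 else 0) + (if z = S c j then 1 else 0)"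
      (is ?c)
proof -
  have "z \<noteq> U c j" using assms unfolding mem_intermediates by blast
  then show ?a ?b ?c by (simp_all add: rvec_eq_rvec_dot)
qed

lemma Y_nonintermediate: "Y c \<notin> intermediates U L"
proof
  assume "Y c \<in> intermediates U L"
  then obtain c' j where "(c', j) \<in> steps" "Y c = U c' j" by (auto simp: mem_intermediates)
  then show False using U_neq_Y[of j c' c] by simp
qed

lemma S_nonintermediate: "i \<le> L c \<Longrightarrow> S c i \<notin> intermediates U L"
proof
  assume "i \<le> L c" "S c i \<in> intermediates U L"
  then obtain c' j where "(c', j) \<in> steps" "S c i = U c' j" by (auto simp: mem_intermediates)
  then show False using U_neq_S[of j c' i c] \<open>i \<le> L c\<close> by simp
qed

lemma monom_sum:
  "(\<Sum>r\<in>R. k r * monom x (fst r) * h r) = (\<Sum>(c, j)\<in>steps.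
     k (rxn_a c j) * (x (Y c) * x (S c (j - 1))) * h (rxn_a c j)
     + k (rxn_b c j) * x (U c j) * h (rxn_b c j) + k (rxn_c c j) * x (U c j) * h (rxn_c c j))"
  unfolding sum_reactions by (rule sum.cong) (auto simp: monom_rxn_a)

lemma dmonom_sum_intermediate:
  assumes "(c1, j1) \<in> steps"
  shows "(\<Sum>r\<in>R. k r * dmonom (fst r) (U c1 j1) x * h r) =
    k (rxn_b c1 j1) * h (rxn_b c1 j1) + k (rxn_c c1 j1) * h (rxn_c c1 j1)"
proof -
  have "dmonom (fst (rxn_a c j)) (U c1 j1) x = 0" "U c1 j1 = U c j \<longleftrightarrow> (c, j) = (c1, j1)"
    if "(c, j) \<in> steps" for c j
    using that assms by (auto simp: dmonom_rxn_a U_neq_Y U_neq_S U_eq_iff)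
  then show ?thesis
    unfolding sum_reactions using assms
    by (subst sum_eq_single[OF finite_steps assms]) (auto split: if_splits)
qed

lemma dmonom_sum_nonintermediate:
  assumes "a \<notin> intermediates U L"
  shows "(\<Sum>r\<in>R. k r * dmonom (fst r) a x * h r) =
    (\<Sum>(c, j)\<in>steps. k (rxn_a c j) * dmonom (fst (rxn_a c j)) a x * h (rxn_a c j))"
  unfolding sum_reactions using assms by (intro sum.cong) (auto simp: mem_intermediates)


definition "component_species c = insert (Y c) (S c ` {..L c})"

text \<open>Either the two reactants form a complex of component c' itself, which pins down the
  component by (H1), or they are two substrates of c', which lie in one class of (H2) --
  impossible for an enzyme and a substrate of the same component.\<close>
lemma assoc_reactants_determine_component:
  assumes cj: "(c, j) \<in> steps"
    and in_c': "Y c \<in> component_species c'" "S c (j - 1) \<in> component_species c'"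
  shows "c = c'"
proof -
  have jl: "j - 1 \<le> L c" using cj by auto
  have ne: "Y c \<noteq> S c (j - 1)" using Y_neq_S_pred[OF cj] .
  consider i where "i \<le> L c'" "cpx2 (Y c) (S c (j - 1)) = cpx2 (Y c') (S c' i)"
    | i i' where "i \<le> L c'" "i' \<le> L c'" "Y c = S c' i" "S c (j - 1) = S c' i'"
    using in_c' ne unfolding component_species_def by (auto simp: cpx2_commute)
  then show ?thesis
  proof cases
    case 1
    then show ?thesis using complex_determines_component[OF jl] by blast
  next
    case 2
    then have "cls (Y c) = cls (S c (j - 1))" using cls_S_eq by metis
    then show ?thesis using cls_Y_neq_S[OF jl] by contradiction
  qed
qed

lemma mem_reactionsE:
  assumes "r \<in> R"
  obtains c j where "(c, j) \<in> steps" "r = rxn_a c j \<or> r = rxn_b c j \<or> r = rxn_c c j"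
  using assms unfolding reactions_eq by blast

lemma jacobian_nonintermediate:
  assumes "s \<notin> intermediates U L" "z \<notin> intermediates U L" "z \<noteq> s" "x s = 0"
  shows "ma_jacobian R k x s z = 0"
  unfolding ma_jacobian_def dmonom_sum_nonintermediate[OF assms(2)]
  using assms by (intro sum.neutral) (auto simp: dmonom_rxn_a rvec_rxn_nonintermediate)

lemma hessian_off_diagonal:
  assumes "s \<notin> intermediates U L" "i \<noteq> s" "a \<noteq> s"
  shows "ma_hessian R k x s i a = 0"
  unfolding ma_hessian_def sum_reactions
  using assms by (intro sum.neutral) (auto simp: ddmonom_rxn_a rvec_rxn_nonintermediate)

lemma pdiff_iterder_2_inert:
  assumes "s \<notin> intermediates U L" "a \<noteq> s"
    and inert: "\<And>r. r \<in> R \<Longrightarrow> monom x (fst r) \<noteq> 0 \<Longrightarrow> rvec r s = 0"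
  shows "pdiff (iterder R k 2 (\<lambda>x. x s)) a x =
    (\<Sum>r\<in>R. k r * dmonom (fst r) a x * rvec_dot (ma_jacobian R k x s) r)"
proof -
  have "rvec_dot (\<lambda>i. ma_hessian R k x s i a) r = ma_hessian R k x s s a * rvec r s" for r
    unfolding rvec_dot_def using assms(1,2) hessian_off_diagonal
    by (subst sum.remove[of _ s]) (auto intro: sum.neutral)
  then have "(\<Sum>r\<in>R. k r * monom x (fst r) * rvec_dot (\<lambda>i. ma_hessian R k x s i a) r) = 0"
    using inert by (intro sum.neutral) auto
  then show ?thesis by (simp add: pdiff_iterder_2)
qed

end

section \<open>Derivatives of the observed product at test points\<close>

locale observed_component = enzyme_network Y S U L cls M
  for Y :: "'c::finite \<Rightarrow> 's::finite" and S U L cls M +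
  fixes c0 :: 'c
begin

abbreviation "product \<equiv> S c0 (L c0)"
abbreviation "obs k l \<equiv> iterder R k l (\<lambda>x. x product)"
abbreviation ka :: "('s reaction \<Rightarrow> real) \<Rightarrow> nat \<Rightarrow> real" where
  "ka k j \<equiv> k (rxn_a c0 j)"
abbreviation kb :: "('s reaction \<Rightarrow> real) \<Rightarrow> nat \<Rightarrow> real" where
  "kb k j \<equiv> k (rxn_b c0 j)"
abbreviation kc :: "('s reaction \<Rightarrow> real) \<Rightarrow> nat \<Rightarrow> real" where
  "kc k j \<equiv> k (rxn_c c0 j)"

text \<open>The test points of the derivatives: at them only reactions of component \<open>c0\<close> fire.\<close>

definition chain_point :: "('s \<Rightarrow> real) \<Rightarrow> bool" where
  "chain_point x \<longleftrightarrow> x product = 0 \<and>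
     (\<forall>z. z \<notin> intermediates U L \<longrightarrow> x z \<noteq> 0 \<longrightarrow> z \<in> component_species c0) \<and>
     (\<forall>c j. (c, j) \<in> steps \<longrightarrow> x (U c j) \<noteq> 0 \<longrightarrow> c = c0)"

definition inner_chain_point :: "('s \<Rightarrow> real) \<Rightarrow> bool" where
  "inner_chain_point x \<longleftrightarrow> chain_point x \<and> x (U c0 (L c0)) = 0"

lemma last_step: "(c0, L c0) \<in> steps"
  using L_pos by simp

lemma product_nonintermediate: "product \<notin> intermediates U L"
  by (rule S_nonintermediate) simp

lemma product_neq_S: "i < L c0 \<Longrightarrow> product \<noteq> S c0 i"
  using S_eq_iff[of i c0 "L c0"] by simp

lemma product_neq_Y: "product \<noteq> Y c0"
  using Y_neq_S[of "L c0" c0] by simp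

lemma U_neq_product: "(c, j) \<in> steps \<Longrightarrow> U c j \<noteq> product"
  by (simp add: U_neq_S)

lemma jacobian_last_intermediate: "ma_jacobian R k x product (U c0 (L c0)) = kc k (L c0)"
proof -
  have "L c0 - 1 < L c0" using L_pos[of c0] by simp
  then show ?thesis
    unfolding ma_jacobian_def dmonom_sum_intermediate[OF last_step]
    using last_step product_nonintermediate product_neq_Y product_neq_S[of "L c0 - 1"]
    by (simp add: rvec_rxn_nonintermediate)
qed

lemma jacobian_inner_intermediate:
  assumes "1 \<le> j" "j < L c0"
  shows "ma_jacobian R k x product (U c0 j) = 0"
proof -
  have "(c0, j) \<in> steps" "j - 1 < L c0" using assms by auto
  then show ?thesis
    unfolding ma_jacobian_def dmonom_sum_intermediate[OF \<open>(c0, j) \<in> steps\<close>]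
    using assms product_nonintermediate product_neq_Y product_neq_S[of "j - 1"] product_neq_S[of j]
    by (simp add: rvec_rxn_nonintermediate)
qed

lemma chain_pointD:
  "chain_point x \<Longrightarrow> z \<notin> intermediates U L \<Longrightarrow> x z \<noteq> 0 \<Longrightarrow> z \<in> component_species c0"
  by (simp add: chain_point_def)

lemma product_in_component: "product \<in> component_species c0"
  by (simp add: component_species_def)

lemma jacobian_product:
  assumes "chain_point x"
  shows "ma_jacobian R k x product product = 0"
proof -
  have "dmonom (fst (rxn_a c j)) product x = 0" if cj: "(c, j) \<in> steps" for c j
  proof -
    have jl: "j - 1 \<le> L c" using cj by auto
    have "x (S c (j - 1)) = 0" if "product = Y c"
    proof (rule ccontr)
      assume "x (S c (j - 1)) \<noteq> 0"
      then have "S c (j - 1) \<in> component_species c0"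
        using chain_pointD[OF assms S_nonintermediate[OF jl]] by blast
      then have "c = c0"
        using assoc_reactants_determine_component[OF cj] product_in_component that by metis
      then show False using that product_neq_Y by simp
    qed
    moreover have "x (Y c) = 0" if "product = S c (j - 1)"
    proof (rule ccontr)
      assume "x (Y c) \<noteq> 0"
      then have "Y c \<in> component_species c0"
        using chain_pointD[OF assms Y_nonintermediate] by blast
      then have "c = c0"
        using assoc_reactants_determine_component[OF cj] product_in_component that by metis
      moreover have "j - 1 < L c" using cj by auto
      ultimately show False using that product_neq_S by blast
    qed
    ultimately show ?thesis using cj by (simp add: dmonom_rxn_a)
  qed
  then show ?thesis
    unfolding ma_jacobian_def dmonom_sum_nonintermediate[OF product_nonintermediate]
    by (intro sum.neutral) auto
qed

lemma jacobian_nonintermediate_chain_point: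
  assumes "chain_point x" "z \<notin> intermediates U L"
  shows "ma_jacobian R k x product z = 0"
proof (cases "z = product")
  case True
  then show ?thesis using jacobian_product[OF assms(1)] by simp
next
  case False
  then show ?thesis
    using assms product_nonintermediate jacobian_nonintermediate by (auto simp: chain_point_def)
qed

lemma sum_steps_component:
  assumes "\<And>c j. (c, j) \<in> steps \<Longrightarrow> c \<noteq> c0 \<Longrightarrow> g c j = 0"
  shows "(\<Sum>(c, j)\<in>steps. g c j) = (\<Sum>j=1..L c0. g c0 j)"
proof -
  have "(\<Sum>(c, j)\<in>steps. g c j) = (\<Sum>(c, j)\<in>Pair c0 ` {1..L c0}. g c j)"
    using assms finite_steps by (intro sum.mono_neutral_right) (fastforce simp: image_iff)+
  also have "\<dots> = (\<Sum>j=1..L c0. g c0 j)"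
    by (subst sum.reindex) (auto simp: inj_on_def)
  finally show ?thesis .
qed

lemma dmonom_sum_chain_point:
  assumes "chain_point x" "a \<in> component_species c0"
  shows "(\<Sum>r\<in>R. k r * dmonom (fst r) a x * h r) =
    (\<Sum>j=1..L c0. ka k j * dmonom (fst (rxn_a c0 j)) a x * h (rxn_a c0 j))"
proof -
  have a_nonint: "a \<notin> intermediates U L"
    using assms(2) Y_nonintermediate S_nonintermediate by (auto simp: component_species_def)
  have "dmonom (fst (rxn_a c j)) a x = 0" if cj: "(c, j) \<in> steps" and "c \<noteq> c0" for c j
  proof (rule ccontr)
    assume "dmonom (fst (rxn_a c j)) a x \<noteq> 0"
    then have "(a = Y c \<and> x (S c (j - 1)) \<noteq> 0) \<or> (a = S c (j - 1) \<and> x (Y c) \<noteq> 0)"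
      using cj by (auto simp: dmonom_rxn_a split: if_splits)
    then have "Y c \<in> component_species c0 \<and> S c (j - 1) \<in> component_species c0"
      using assms chain_pointD Y_nonintermediate S_nonintermediate[of "j - 1" c] cj by auto
    then show False using assoc_reactants_determine_component[OF cj] \<open>c \<noteq> c0\<close> by blast
  qed
  then show ?thesis
    unfolding dmonom_sum_nonintermediate[OF a_nonint] by (intro sum_steps_component) simp
qed

lemma dmonom_sum_enzyme:
  assumes "chain_point x"
  shows "(\<Sum>r\<in>R. k r * dmonom (fst r) (Y c0) x * h r) =
    (\<Sum>j=1..L c0. ka k j * x (S c0 (j - 1)) * h (rxn_a c0 j))"
  using assms by (simp add: dmonom_sum_chain_point component_species_def dmonom_rxn_a)

lemma dmonom_sum_substrate:
  assumes "chain_point x" "i < L c0"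
  shows "(\<Sum>r\<in>R. k r * dmonom (fst r) (S c0 i) x * h r) =
    ka k (Suc i) * x (Y c0) * h (rxn_a c0 (Suc i))"
proof -
  have "dmonom (fst (rxn_a c0 j)) (S c0 i) x = (if j = Suc i then x (Y c0) else 0)"
    if "j \<in> {1..L c0}" for j
    using that assms(2) Y_neq_S[of i c0] S_eq_iff[of i c0 "j - 1"] by (auto simp: dmonom_rxn_a)
  then show ?thesis
    using assms
    by (simp add: dmonom_sum_chain_point component_species_def sum_eq_single[of _ "Suc i"])
qed

lemma product_unchanged_at_inner_chain_point:
  assumes x: "inner_chain_point x" and "r \<in> R" "monom x (fst r) \<noteq> 0"
  shows "rvec r product = 0"
proof -
  obtain c j where cj: "(c, j) \<in> steps" and r: "r = rxn_a c j \<or> r = rxn_b c j \<or> r = rxn_c c j"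
    using \<open>r \<in> R\<close> by (rule mem_reactionsE)
  have jm: "j - 1 < L c" using cj by auto
  show ?thesis
  proof (cases "r = rxn_a c j")
    case True
    then have "x (Y c) \<noteq> 0" "x (S c (j - 1)) \<noteq> 0"
      using assms(3) cj by (auto simp: monom_rxn_a)
    then have "Y c \<in> component_species c0" "S c (j - 1) \<in> component_species c0"
      using x Y_nonintermediate S_nonintermediate[of "j - 1" c] jm
      by (auto simp: inner_chain_point_def chain_point_def)
    then have "c = c0" using assoc_reactants_determine_component[OF cj] by blast
    then show ?thesis
      using True cj jm product_nonintermediate product_neq_Y product_neq_S[of "j - 1"]
      by (simp add: rvec_rxn_nonintermediate)
  next
    case False
    then have bc: "r = rxn_b c j \<or> r = rxn_c c j" using r by simp
    then have "x (U c j) \<noteq> 0" using assms(3) by auto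
    then have "c = c0" "j \<noteq> L c0" using x cj by (auto simp: inner_chain_point_def chain_point_def)
    then have "c = c0" "j < L c0" using cj by auto
    then show ?thesis
      using bc cj jm product_nonintermediate product_neq_Y
        product_neq_S[of "j - 1"] product_neq_S[of j]
      by (auto simp: rvec_rxn_nonintermediate)
  qed
qed

lemma pdiff_obs2_inner_chain_point:
  assumes "inner_chain_point x" "a \<noteq> product"
  shows "pdiff (obs k 2) a x =
    (\<Sum>r\<in>R. k r * dmonom (fst r) a x * rvec_dot (ma_jacobian R k x product) r)"
  using assms product_unchanged_at_inner_chain_point
  by (intro pdiff_iterder_2_inert product_nonintermediate) auto

lemma jacobian_chain_species:
  assumes "chain_point x"
  shows "ma_jacobian R k x product (Y c0) = 0" "i \<le> L c0 \<Longrightarrow> ma_jacobian R k x product (S c0 i) = 0"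
  using assms Y_nonintermediate S_nonintermediate jacobian_nonintermediate_chain_point by auto

lemma jacobian_intermediate_step:
  "j \<in> {1..L c0} \<Longrightarrow> ma_jacobian R k x product (U c0 j) = (if j = L c0 then kc k (L c0) else 0)"
  using jacobian_last_intermediate jacobian_inner_intermediate by auto

lemma pdiff_obs2_last_intermediate:
  assumes "inner_chain_point x"
  shows "pdiff (obs k 2) (U c0 (L c0)) x = - (kb k (L c0) + kc k (L c0)) * kc k (L c0)"
proof -
  have x: "chain_point x" using assms by (simp add: inner_chain_point_def)
  show ?thesis
    unfolding pdiff_obs2_inner_chain_point[OF assms U_neq_product[OF last_step]]
      dmonom_sum_intermediate[OF last_step]
    using x jacobian_chain_species(1) jacobian_chain_species(2)[of x "L c0 - 1"]
      jacobian_chain_species(2)[of x "L c0"]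
    by (simp add: jacobian_last_intermediate algebra_simps)
qed

lemma pdiff_obs2_inner_intermediate:
  assumes "inner_chain_point x" "1 \<le> j" "j < L c0"
  shows "pdiff (obs k 2) (U c0 j) x = 0"
proof -
  have "chain_point x" using assms by (simp add: inner_chain_point_def)
  moreover have "(c0, j) \<in> steps" "U c0 j \<noteq> product" using assms by (auto simp: U_neq_S)
  ultimately show ?thesis
    using assms jacobian_chain_species(1) jacobian_chain_species(2)[of x "j - 1"]
      jacobian_chain_species(2)[of x j]
    by (simp add: pdiff_obs2_inner_chain_point dmonom_sum_intermediate jacobian_inner_intermediate)
qed

lemma pdiff_obs2_enzyme:
  assumes "inner_chain_point x"
  shows "pdiff (obs k 2) (Y c0) x = ka k (L c0) * kc k (L c0) * x (S c0 (L c0 - 1))"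
proof -
  have x: "chain_point x" using assms by (simp add: inner_chain_point_def)
  have "pdiff (obs k 2) (Y c0) x =
      (\<Sum>j=1..L c0. ka k j * x (S c0 (j - 1)) * (if j = L c0 then kc k (L c0) else 0))"
    unfolding pdiff_obs2_inner_chain_point[OF assms product_neq_Y[symmetric]]
      dmonom_sum_enzyme[OF x]
    using jacobian_chain_species[OF x] jacobian_intermediate_step
    by (intro sum.cong) auto
  also have "\<dots> = ka k (L c0) * kc k (L c0) * x (S c0 (L c0 - 1))"
    using L_pos[of c0] by (subst sum_eq_single[of _ "L c0"]) auto
  finally show ?thesis .
qed

lemma pdiff_obs2_substrate:
  assumes "inner_chain_point x" "i < L c0"
  shows "pdiff (obs k 2) (S c0 i) x =
    (if Suc i = L c0 then ka k (L c0) * kc k (L c0) * x (Y c0) else 0)"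
proof -
  have x: "chain_point x" using assms by (simp add: inner_chain_point_def)
  then show ?thesis
    using assms product_neq_S[of i] jacobian_chain_species[OF x]
      jacobian_intermediate_step[of "Suc i" k x]
    by (simp add: pdiff_obs2_inner_chain_point dmonom_sum_substrate)
qed


lemma monom_sum_chain_point:
  assumes x: "chain_point x"
  shows "(\<Sum>r\<in>R. k r * monom x (fst r) * h r) = (\<Sum>j=1..L c0.
     ka k j * (x (Y c0) * x (S c0 (j - 1))) * h (rxn_a c0 j)
     + kb k j * x (U c0 j) * h (rxn_b c0 j) + kc k j * x (U c0 j) * h (rxn_c c0 j))"
proof -
  have "x (Y c) * x (S c (j - 1)) = 0" "x (U c j) = 0" if cj: "(c, j) \<in> steps" and "c \<noteq> c0" for c j
  proof -
    have "Y c \<notin> component_species c0 \<or> S c (j - 1) \<notin> component_species c0"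
      using assoc_reactants_determine_component[OF cj] \<open>c \<noteq> c0\<close> by blast
    then show "x (Y c) * x (S c (j - 1)) = 0"
      using x cj Y_nonintermediate S_nonintermediate[of "j - 1" c] by (auto simp: chain_point_def)
    show "x (U c j) = 0" using x cj \<open>c \<noteq> c0\<close> by (auto simp: chain_point_def)
  qed
  then show ?thesis unfolding monom_sum by (intro sum_steps_component) simp
qed

lemma chain_point_indicator:
  assumes "product \<notin> P" "P \<subseteq> component_species c0 \<union> U c0 ` {1..L c0}"
  shows "chain_point (indicator P)"
proof -
  have "z \<in> component_species c0" if "z \<in> P" "z \<notin> intermediates U L" for z
  proof -
    have "z \<notin> U c0 ` {1..L c0}" using that(2) by (auto simp: mem_intermediates)
    then show ?thesis using that(1) assms(2) by blast
  qed
  moreover have "c = c0" if cj: "(c, j) \<in> steps" and "U c j \<in> P" for c j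
  proof -
    have "U c j \<notin> component_species c0"
      using cj U_neq_Y U_neq_S by (auto simp: component_species_def)
    then obtain j' where "j' \<in> {1..L c0}" "U c j = U c0 j'" using \<open>U c j \<in> P\<close> assms(2) by blast
    then show ?thesis using cj U_eq_iff by simp
  qed
  ultimately show ?thesis using assms(1) by (auto simp: chain_point_def indicator_def)
qed

lemma indicator_last_intermediate:
  "j \<in> {1..L c0} \<Longrightarrow> indicator {U c0 (L c0)} (U c0 j) = (if j = L c0 then 1 else 0)"
  using U_eq_iff[of j c0 "L c0" c0] L_pos[of c0] by auto

lemma chain_point_last_intermediate: "chain_point (indicator {U c0 (L c0)})"
  using U_neq_product[OF last_step] L_pos[of c0] by (intro chain_point_indicator) auto

lemma obs1_last_intermediate: "obs k 1 (indicator {U c0 (L c0)}) = kc k (L c0)"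
proof -
  let ?x = "indicator {U c0 (L c0)} :: 's \<Rightarrow> real"
  have "?x (Y c0) = 0" using last_step by (simp add: U_neq_Y[symmetric])
  then have "obs k 1 ?x = (\<Sum>j=1..L c0. (if j = L c0 then
      kb k j * rvec (rxn_b c0 j) product + kc k j * rvec (rxn_c c0 j) product else 0))"
    unfolding iterder_1 massaction_eq_rvec monom_sum_chain_point[OF chain_point_last_intermediate]
    by (intro sum.cong) (auto simp: indicator_last_intermediate)
  also have "\<dots> = kc k (L c0)"
    using last_step product_nonintermediate product_neq_Y product_neq_S[of "L c0 - 1"] L_pos[of c0]
    by (simp add: rvec_rxn_nonintermediate)
  finally show ?thesis .
qed

lemma obs2_last_intermediate:
  "obs k 2 (indicator {U c0 (L c0)}) = - (kb k (L c0) + kc k (L c0)) * kc k (L c0)"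
proof -
  let ?x = "indicator {U c0 (L c0)} :: 's \<Rightarrow> real"
  let ?J = "ma_jacobian R k ?x product"
  have "?x (Y c0) = 0" using last_step by (simp add: U_neq_Y[symmetric])
  then have "obs k 2 ?x = (\<Sum>j=1..L c0. (if j = L c0 then
      kb k j * rvec_dot ?J (rxn_b c0 j) + kc k j * rvec_dot ?J (rxn_c c0 j) else 0))"
    unfolding iterder_2 monom_sum_chain_point[OF chain_point_last_intermediate]
    by (intro sum.cong) (auto simp: indicator_last_intermediate)
  also have "\<dots> = - (kb k (L c0) + kc k (L c0)) * kc k (L c0)"
    using jacobian_chain_species[OF chain_point_last_intermediate] L_pos[of c0]
    by (simp add: jacobian_last_intermediate algebra_simps)
  finally show ?thesis .
qed

lemma obs2_enzyme_substrate:
  "obs k 2 (indicator {Y c0, S c0 (L c0 - 1)}) = ka k (L c0) * kc k (L c0)"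
proof -
  let ?x = "indicator {Y c0, S c0 (L c0 - 1)} :: 's \<Rightarrow> real"
  let ?J = "ma_jacobian R k ?x product"
  have x: "chain_point ?x"
    using product_neq_Y product_neq_S[of "L c0 - 1"] L_pos[of c0]
    by (intro chain_point_indicator) (auto simp: component_species_def)
  have "?x (Y c0) * ?x (S c0 (j - 1)) = (if j = L c0 then 1 else 0)" "?x (U c0 j) = 0"
    if j: "j \<in> {1..L c0}" for j
  proof -
    have jm: "j - 1 \<le> L c0" "L c0 - 1 \<le> L c0" using j by auto
    have "S c0 (j - 1) \<noteq> Y c0" "S c0 (j - 1) = S c0 (L c0 - 1) \<longleftrightarrow> j = L c0"
      using j Y_neq_S[OF jm(1)] S_eq_iff[OF jm] by auto
    then show "?x (Y c0) * ?x (S c0 (j - 1)) = (if j = L c0 then 1 else 0)" by simp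
    show "?x (U c0 j) = 0"
      using j U_neq_Y[of j c0 c0] U_neq_S[of j c0 "L c0 - 1" c0] by simp
  qed
  then have "obs k 2 ?x = (\<Sum>j=1..L c0. (if j = L c0 then ka k j * rvec_dot ?J (rxn_a c0 j) else 0))"
    unfolding iterder_2 monom_sum_chain_point[OF x] by (intro sum.cong) auto
  also have "\<dots> = ka k (L c0) * kc k (L c0)"
    using jacobian_chain_species[OF x] L_pos[of c0] by (simp add: jacobian_last_intermediate)
  finally show ?thesis .
qed

lemma inner_chain_point_indicator:
  assumes "product \<notin> P" "U c0 (L c0) \<notin> P" "P \<subseteq> component_species c0 \<union> U c0 ` {1..L c0}"
  shows "inner_chain_point (indicator P)"
  using assms chain_point_indicator by (simp add: inner_chain_point_def)

lemma obs3_inner_intermediate: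
  assumes j0: "1 \<le> j0" "j0 < L c0"
  shows "obs k 3 (indicator {U c0 j0, S c0 (L c0 - 1)}) =
    (kb k j0 + kc k j0) * (ka k (L c0) * kc k (L c0))"
proof -
  let ?x = "indicator {U c0 j0, S c0 (L c0 - 1)} :: 's \<Rightarrow> real"
  let ?g = "\<lambda>a. pdiff (obs k 2) a ?x"
  have step0: "(c0, j0) \<in> steps" using j0 by simp
  have x: "inner_chain_point ?x"
    using j0 U_neq_product[OF step0] product_neq_S[of "L c0 - 1"] U_eq_iff[of j0 c0 "L c0" c0]
      U_neq_S[of j0 c0 "L c0 - 1" c0] U_neq_S[of "L c0" c0 "L c0 - 1" c0] L_pos[of c0]
    by (intro inner_chain_point_indicator) (auto simp: component_species_def)
  have Y0: "?x (Y c0) = 0"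
    using j0 U_neq_Y[of j0 c0 c0] Y_neq_S[of "L c0 - 1" c0] by auto
  have "?x (U c0 j) = (if j = j0 then 1 else 0)" if "j \<in> {1..L c0}" for j
    using that j0 U_eq_iff[of j c0 j0 c0] U_neq_S[of j c0 "L c0 - 1" c0] by auto
  then have "obs k 3 ?x = (\<Sum>j=1..L c0. (if j = j0 then
      kb k j * rvec_dot ?g (rxn_b c0 j) + kc k j * rvec_dot ?g (rxn_c c0 j) else 0))"
    unfolding iterder_3 monom_sum_chain_point[OF x[unfolded inner_chain_point_def, THEN conjunct1]]
    using Y0 by (intro sum.cong) auto
  also have "\<dots> = (kb k j0 + kc k j0) * (ka k (L c0) * kc k (L c0))"
    using j0 x Y0 by (simp add: pdiff_obs2_enzyme pdiff_obs2_substrate pdiff_obs2_inner_intermediate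
        algebra_simps)
  finally show ?thesis .
qed

lemma obs3_enzyme_substrates:
  assumes j0: "1 \<le> j0" "j0 < L c0"
  shows "obs k 3 (indicator {Y c0, S c0 (L c0 - 1), S c0 (j0 - 1)}) =
    - (ka k (L c0) * kc k (L c0)) * (kb k (L c0) + kc k (L c0) + 2 * ka k (L c0) + ka k j0)"
proof -
  let ?x = "indicator {Y c0, S c0 (L c0 - 1), S c0 (j0 - 1)} :: 's \<Rightarrow> real"
  let ?g = "\<lambda>a. pdiff (obs k 2) a ?x"
  have x: "inner_chain_point ?x"
    using j0 product_neq_Y product_neq_S[of "L c0 - 1"] product_neq_S[of "j0 - 1"]
      U_neq_Y[of "L c0" c0 c0] U_neq_S[of "L c0" c0 "L c0 - 1" c0] U_neq_S[of "L c0" c0 "j0 - 1" c0]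
    by (intro inner_chain_point_indicator) (auto simp: component_species_def)
  have "?x (Y c0) * ?x (S c0 (j - 1)) = (if j = L c0 \<or> j = j0 then 1 else 0)" "?x (U c0 j) = 0"
    if j: "j \<in> {1..L c0}" for j
  proof -
    have jm: "j - 1 \<le> L c0" "L c0 - 1 \<le> L c0" "j0 - 1 \<le> L c0" using j j0 by auto
    have "S c0 (j - 1) \<noteq> Y c0" "S c0 (j - 1) = S c0 (L c0 - 1) \<longleftrightarrow> j = L c0"
      "S c0 (j - 1) = S c0 (j0 - 1) \<longleftrightarrow> j = j0"
      using j j0 Y_neq_S[OF jm(1)] S_eq_iff[OF jm(1,2)] S_eq_iff[OF jm(1,3)] by auto
    then show "?x (Y c0) * ?x (S c0 (j - 1)) = (if j = L c0 \<or> j = j0 then 1 else 0)" by auto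
    show "?x (U c0 j) = 0"
      using j U_neq_Y[of j c0 c0] U_neq_S[OF _ _ jm(2)] U_neq_S[OF _ _ jm(3)] by auto
  qed
  then have "obs k 3 ?x = (\<Sum>j=1..L c0. (if j = L c0 \<or> j = j0 then
      ka k j * rvec_dot ?g (rxn_a c0 j) else 0))"
    unfolding iterder_3 monom_sum_chain_point[OF x[unfolded inner_chain_point_def, THEN conjunct1]]
    by (intro sum.cong) auto
  also have "\<dots> = ka k (L c0) * rvec_dot ?g (rxn_a c0 (L c0)) + ka k j0 * rvec_dot ?g (rxn_a c0 j0)"
    using j0 by (subst sum_eq_pair[of _ "L c0" j0]) auto
  also have "\<dots> =
      - (ka k (L c0) * kc k (L c0)) * (kb k (L c0) + kc k (L c0) + 2 * ka k (L c0) + ka k j0)"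
    using j0 x L_pos[of c0]
    by (simp add: pdiff_obs2_enzyme pdiff_obs2_substrate pdiff_obs2_inner_intermediate
        pdiff_obs2_last_intermediate algebra_simps)
  finally show ?thesis .
qed


lemma last_step_rates_pos:
  assumes "\<forall>r\<in>R. 0 < k r"
  shows "0 < ka k (L c0)" "0 < kc k (L c0)"
proof -
  have "rxn_a c0 (L c0) \<in> R" "rxn_c c0 (L c0) \<in> R"
    unfolding reactions_eq using last_step by blast+
  then show "0 < ka k (L c0)" "0 < kc k (L c0)" using assms by auto
qed

lemma identifiable_last_step:
  "identifiable R (\<lambda>k. (ka k (L c0), kb k (L c0), kc k (L c0))) product 2"
  unfolding identifiable_def
proof (intro allI impI)
  fix k1 k2 :: "'s reaction \<Rightarrow> real"
  assume pos: "\<forall>r\<in>R. 0 < k1 r" and "\<forall>r\<in>R. 0 < k2 r"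
    and "\<forall>l\<in>{1..2}. obs k1 l = obs k2 l"
  then have obs1: "obs k1 1 = obs k2 1" and obs2: "obs k1 2 = obs k2 2" by auto
  have c: "kc k1 (L c0) = kc k2 (L c0)"
    using fun_cong[OF obs1, of "indicator {U c0 (L c0)}"] by (simp only: obs1_last_intermediate)
  have "- (kb k1 (L c0) + kc k1 (L c0)) * kc k1 (L c0) =
        - (kb k2 (L c0) + kc k2 (L c0)) * kc k2 (L c0)"
    using fun_cong[OF obs2, of "indicator {U c0 (L c0)}"] by (simp only: obs2_last_intermediate)
  then have b: "kb k1 (L c0) = kb k2 (L c0)"
    using c last_step_rates_pos(2)[OF pos] by simp
  have "ka k1 (L c0) * kc k1 (L c0) = ka k2 (L c0) * kc k2 (L c0)"
    using fun_cong[OF obs2, of "indicator {Y c0, S c0 (L c0 - 1)}"]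
    by (simp only: obs2_enzyme_substrate)
  then have a: "ka k1 (L c0) = ka k2 (L c0)"
    using c last_step_rates_pos(2)[OF pos] by simp
  show "(ka k1 (L c0), kb k1 (L c0), kc k1 (L c0)) = (ka k2 (L c0), kb k2 (L c0), kc k2 (L c0))"
    using a b c by simp
qed

lemma identifiable_inner_steps:
  "identifiable R (\<lambda>k. map (\<lambda>j. (ka k j, kb k j + kc k j)) [1..<L c0]) product 3"
  unfolding identifiable_def
proof (intro allI impI map_cong refl)
  fix k1 k2 :: "'s reaction \<Rightarrow> real" and j
  assume pos: "\<forall>r\<in>R. 0 < k1 r" and pos2: "\<forall>r\<in>R. 0 < k2 r"
    and obs: "\<forall>l\<in>{1..3}. obs k1 l = obs k2 l" and "j \<in> set [1..<L c0]"
  then have j: "1 \<le> j" "j < L c0" and obs3: "obs k1 3 = obs k2 3" by auto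
  have "\<forall>l\<in>{1..2}. obs k1 l = obs k2 l" using obs by auto
  then have last: "ka k1 (L c0) = ka k2 (L c0)" "kb k1 (L c0) = kb k2 (L c0)"
    "kc k1 (L c0) = kc k2 (L c0)"
    using identifiable_last_step pos pos2 by (auto simp: identifiable_def)
  have nz: "ka k1 (L c0) * kc k1 (L c0) \<noteq> 0" using last_step_rates_pos[OF pos] by simp
  have "(kb k1 j + kc k1 j) * (ka k1 (L c0) * kc k1 (L c0)) =
        (kb k2 j + kc k2 j) * (ka k2 (L c0) * kc k2 (L c0))"
    using fun_cong[OF obs3, of "indicator {U c0 j, S c0 (L c0 - 1)}"]
    by (simp only: obs3_inner_intermediate[OF j])
  then have K: "kb k1 j + kc k1 j = kb k2 j + kc k2 j" using last nz by simp
  have "- (ka k1 (L c0) * kc k1 (L c0)) *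
          (kb k1 (L c0) + kc k1 (L c0) + 2 * ka k1 (L c0) + ka k1 j) =
        - (ka k2 (L c0) * kc k2 (L c0)) *
          (kb k2 (L c0) + kc k2 (L c0) + 2 * ka k2 (L c0) + ka k2 j)"
    using fun_cong[OF obs3, of "indicator {Y c0, S c0 (L c0 - 1), S c0 (j - 1)}"]
    by (simp only: obs3_enzyme_substrates[OF j])
  then have a: "ka k1 j = ka k2 j" using last nz by simp
  show "(ka k1 j, kb k1 j + kc k1 j) = (ka k2 j, kb k2 j + kc k2 j)" using a K by simp
qed

end

theorem mainTheorem7:
  fixes Y :: "'c::finite \<Rightarrow> 's::finite" and S U :: "'c \<Rightarrow> nat \<Rightarrow> 's"
    and L :: "'c \<Rightarrow> nat" and cls :: "'s \<Rightarrow> nat" and M :: nat and c0 :: 'c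
  assumes "H1 Y S U L" and "H2 Y S U L cls M"
  shows "identifiable (reactions Y S U L)
           (\<lambda>k. (rate_a Y S U k c0 (L c0), rate_b Y S U k c0 (L c0), rate_c Y S U k c0 (L c0)))
           (S c0 (L c0)) 2 \<and>
         (1 < L c0 \<longrightarrow> identifiable (reactions Y S U L)
           (\<lambda>k. map (\<lambda>j. (rate_a Y S U k c0 j, rate_K Y S U k c0 j)) [1..<L c0])
           (S c0 (L c0)) 3)"
proof -
  interpret observed_component Y S U L cls M c0
    using assms by unfold_locales
  have rates: "rate_a Y S U k c0 j = ka k j" "rate_b Y S U k c0 j = kb k j"
    "rate_c Y S U k c0 j = kc k j" "rate_K Y S U k c0 j = kb k j + kc k j" for k j
    by (simp_all add: rate_a_def rate_b_def rate_c_def rate_K_def rxn_a_def rxn_b_def rxn_c_def)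
  show ?thesis
    unfolding rates using identifiable_last_step identifiable_inner_steps by simp
qed

end
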